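(* The weighted chromatic polynomial, viewed as an invariant of simple graphs (every vertex assigned weight $1$), is a $4$-invariant: for every simple graph $G$ and every pair of distinct vertices $a,b$ of $G$, $$W_G-W_{G'_{ab}}=W_{\widetilde G_{ab}}-W_{\widetilde G'_{ab}}.$$
   Context: A weighted graph is a simple graph with a positive integer weight assigned to each vertex. The weighted chromatic polynomial $W_G\in\mathbb{C}[q_1,q_2,\dots]$ is the unique weighted graph invariant such that: (i) the graph with one vertex of weight $n$ has $W=q_n$; (ii) $W_{G_1\sqcup G_2}=W_{G_1}W_{G_2}$ for disjoint unions; (iii) $W_G=W_{G'_e}+W_{G''_e}$ for every edge $e$, where $G'_e$ is $G$ with $e$ deleted and $G''_e$ is $G$ with $e$ contracted (the two ends of $e$ merge into one vertex whose weight is the sum of their weights, and multiple edges arising are replaced by single edges). A simple graph is regarded as a weighted graph with all weights equal to $1$. For a simple graph $G$ and vertices $a,b$: $G'_{ab}$ is obtained from $G$ by switching adjacency between $a$ and $b$ (adding the edge $ab$ if absent, removing it if present); $\widetilde G_{ab}$ is obtained from $G$ by switching the adjacency between $a$ and each vertex $v\ne a$ of $G$ adjacent to $b$; $\widetilde G'_{ab}$ is obtained by composing these two operations. *)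

theory Defs
  imports Complex_Main "HOL-Library.Poly_Mapping"
begin

text \<open>The polynomial ring C[q_1,q_2,...]: finitely supported coefficient functions on
  monomials, a monomial being a finitely supported exponent vector (nat to nat).\<close>
type_synonym wpoly = "(nat \<Rightarrow>\<^sub>0 nat) \<Rightarrow>\<^sub>0 complex"

definition qvar :: "nat \<Rightarrow> wpoly" where
  "qvar n = Poly_Mapping.single (Poly_Mapping.single n 1) 1"

text \<open>A weighted graph also has a weight function w, positive on V
  (values outside V are irrelevant).\<close>
definition simple_graph :: "nat set \<Rightarrow> nat set set \<Rightarrow> bool" where
  "simple_graph V E \<longleftrightarrow> finite V \<and>
     (\<forall>e\<in>E. \<exists>x y. e = {x, y} \<and> x \<noteq> y \<and> x \<in> V \<and> y \<in> V)"

definition weighted_graph :: "nat set \<Rightarrow> nat set set \<Rightarrow> (nat \<Rightarrow> nat) \<Rightarrow> bool" where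
  "weighted_graph V E w \<longleftrightarrow> simple_graph V E \<and> (\<forall>v\<in>V. 0 < w v)"

definition wg_iso :: "nat set \<Rightarrow> nat set set \<Rightarrow> (nat \<Rightarrow> nat) \<Rightarrow>
                      nat set \<Rightarrow> nat set set \<Rightarrow> (nat \<Rightarrow> nat) \<Rightarrow> bool" where
  "wg_iso V1 E1 w1 V2 E2 w2 \<longleftrightarrow> (\<exists>f. bij_betw f V1 V2 \<and>
     (\<forall>x\<in>V1. \<forall>y\<in>V1. {x, y} \<in> E1 \<longleftrightarrow> {f x, f y} \<in> E2) \<and>
     (\<forall>x\<in>V1. w2 (f x) = w1 x))"

text \<open>Contraction of the edge {a,b}: vertex b is merged into vertex a, which receives
  weight w a + w b; multiple edges are replaced by single edges (automatic for sets).\<close>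
definition contract_edges :: "nat set set \<Rightarrow> nat \<Rightarrow> nat \<Rightarrow> nat set set" where
  "contract_edges E a b = {e \<in> E. b \<notin> e} \<union> {{a, u} | u. {b, u} \<in> E \<and> u \<noteq> a}"

definition contract_weight :: "(nat \<Rightarrow> nat) \<Rightarrow> nat \<Rightarrow> nat \<Rightarrow> (nat \<Rightarrow> nat)" where
  "contract_weight w a b = w(a := w a + w b)"

text \<open>The defining properties of the weighted chromatic polynomial W, viewed as a function
  F V E w of weighted graphs (on vertex sets of naturals): invariance under isomorphism,
  (i) one-vertex graphs, (ii) multiplicativity on disjoint unions, (iii) deletion-contraction.\<close>
definition is_weighted_chromatic ::
    "(nat set \<Rightarrow> nat set set \<Rightarrow> (nat \<Rightarrow> nat) \<Rightarrow> wpoly) \<Rightarrow> bool" where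
  "is_weighted_chromatic F \<longleftrightarrow>
     (\<forall>V1 E1 w1 V2 E2 w2. weighted_graph V1 E1 w1 \<longrightarrow> weighted_graph V2 E2 w2 \<longrightarrow>
        wg_iso V1 E1 w1 V2 E2 w2 \<longrightarrow> F V1 E1 w1 = F V2 E2 w2) \<and>
     (\<forall>v w. 0 < w v \<longrightarrow> F {v} {} w = qvar (w v)) \<and>
     (\<forall>V1 E1 w1 V2 E2 w2. weighted_graph V1 E1 w1 \<longrightarrow> weighted_graph V2 E2 w2 \<longrightarrow>
        V1 \<inter> V2 = {} \<longrightarrow>
        F (V1 \<union> V2) (E1 \<union> E2) (\<lambda>x. if x \<in> V1 then w1 x else w2 x) = F V1 E1 w1 * F V2 E2 w2) \<and>
     (\<forall>V E w a b. weighted_graph V E w \<longrightarrow> {a, b} \<in> E \<longrightarrow>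
        F V E w = F V (E - {{a, b}}) w + F (V - {b}) (contract_edges E a b) (contract_weight w a b))"

definition switch_ab :: "nat set set \<Rightarrow> nat \<Rightarrow> nat \<Rightarrow> nat set set" where
  "switch_ab E a b = (if {a, b} \<in> E then E - {{a, b}} else insert {a, b} E)"

definition tilde_ab :: "nat set set \<Rightarrow> nat \<Rightarrow> nat \<Rightarrow> nat set set" where
  "tilde_ab E a b = (let T = {{a, v} | v. v \<noteq> a \<and> {b, v} \<in> E} in (E - T) \<union> (T - E))"

definition tilde'_ab :: "nat set set \<Rightarrow> nat \<Rightarrow> nat \<Rightarrow> nat set set" where
  "tilde'_ab E a b = switch_ab (tilde_ab E a b) a b"

abbreviation unit_weight :: "nat \<Rightarrow> nat" where
  "unit_weight \<equiv> (\<lambda>_. 1)"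

end

theory Submission
  imports Defs
begin

text \<open>Deletion-contraction at the pair \<open>ab\<close> shows that \<open>W G - W G'\<close> is plus or minus the
  weighted chromatic polynomial of the graph obtained from \<open>G\<close> by merging \<open>b\<close> into \<open>a\<close>,
  with sign plus iff \<open>ab\<close> is an edge of \<open>G\<close>. Passing from \<open>G\<close> to \<open>G~\<close> changes neither
  whether \<open>ab\<close> is an edge nor this merged graph: the switched pairs join \<open>a\<close> to
  neighbours of \<open>b\<close>, which become adjacent to the merged vertex anyway.\<close>

lemma mem_tilde_ab_iff:
  "e \<in> tilde_ab E a b \<longleftrightarrow> (e \<in> E \<longleftrightarrow> \<not> (\<exists>v. e = {a, v} \<and> v \<noteq> a \<and> {b, v} \<in> E))"
  unfolding tilde_ab_def Let_def by blast

lemma edge_ab_in_tilde_ab_iff: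
  assumes "a \<noteq> b" and "{b} \<notin> E"
  shows "{a, b} \<in> tilde_ab E a b \<longleftrightarrow> {a, b} \<in> E"
  using assms by (auto simp: mem_tilde_ab_iff doubleton_eq_iff)

lemma contract_edges_insert_ab:
  assumes "a \<noteq> b"
  shows "contract_edges (insert {a, b} E) a b = contract_edges E a b"
  using assms unfolding contract_edges_def by (auto simp: doubleton_eq_iff)

lemma contract_edges_tilde_ab:
  assumes "a \<noteq> b"
  shows "contract_edges (tilde_ab E a b) a b = contract_edges E a b"
proof -
  have "{b, u} \<in> tilde_ab E a b \<longleftrightarrow> {b, u} \<in> E" if "u \<noteq> a" for u
    using assms that by (auto simp: mem_tilde_ab_iff doubleton_eq_iff)
  moreover have "e \<in> tilde_ab E a b \<longleftrightarrow> e \<in> E"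
    if "b \<notin> e" and "\<nexists>u. e = {a, u} \<and> {b, u} \<in> E \<and> u \<noteq> a" for e
    using that by (auto simp: mem_tilde_ab_iff)
  ultimately show ?thesis
    unfolding contract_edges_def by blast
qed

lemma simple_graph_no_loop: "simple_graph V E \<Longrightarrow> {v} \<notin> E"
  unfolding simple_graph_def by (auto simp: doubleton_eq_iff)

lemma simple_graph_insert_edge:
  assumes "simple_graph V E" and "a \<in> V" and "b \<in> V" and "a \<noteq> b"
  shows "simple_graph V (insert {a, b} E)"
  using assms unfolding simple_graph_def by auto

lemma simple_graph_tilde_ab:
  assumes "simple_graph V E" and "a \<in> V"
  shows "simple_graph V (tilde_ab E a b)"
  unfolding simple_graph_def
proof (intro conjI ballI)
  show "finite V"
    using assms(1) unfolding simple_graph_def by simp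
next
  fix e
  assume e: "e \<in> tilde_ab E a b"
  show "\<exists>x y. e = {x, y} \<and> x \<noteq> y \<and> x \<in> V \<and> y \<in> V"
  proof (cases "e \<in> E")
    case True
    then show ?thesis
      using assms(1) unfolding simple_graph_def by blast
  next
    case False
    then obtain v where v: "e = {a, v}" "v \<noteq> a" "{b, v} \<in> E"
      using e mem_tilde_ab_iff by blast
    from v(3) assms(1) have "v \<in> V"
      unfolding simple_graph_def by (auto simp: doubleton_eq_iff)
    then show ?thesis
      using v assms(2) by blast
  qed
qed

lemma weighted_chromatic_deletion_contraction:
  assumes "is_weighted_chromatic W" and "weighted_graph V E w" and "{a, b} \<in> E"
  shows "W V E w = W V (E - {{a, b}}) w + W (V - {b}) (contract_edges E a b) (contract_weight w a b)"
  using assms(1) unfolding is_weighted_chromatic_def using assms(2,3) by simp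

lemma weighted_chromatic_diff_switch_ab:
  assumes W: "is_weighted_chromatic W"
    and G: "weighted_graph V E w" and "a \<in> V" and "b \<in> V" and "a \<noteq> b"
  defines "C \<equiv> W (V - {b}) (contract_edges E a b) (contract_weight w a b)"
  shows "W V E w - W V (switch_ab E a b) w = (if {a, b} \<in> E then C else - C)"
proof -
  have "weighted_graph V (insert {a, b} E) w"
    using G assms(3-5) simple_graph_insert_edge unfolding weighted_graph_def by blast
  from weighted_chromatic_deletion_contraction[OF W this insertI1]
  have "W V (insert {a, b} E) w = W V (E - {{a, b}}) w + C"
    unfolding C_def contract_edges_insert_ab[OF assms(5)] by simp
  then show ?thesis
    unfolding switch_ab_def by (auto simp: insert_absorb)
qed

theorem mainTheorem1:
  fixes W :: "nat set \<Rightarrow> nat set set \<Rightarrow> (nat \<Rightarrow> nat) \<Rightarrow> wpoly"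
    and V :: "nat set" and E :: "nat set set" and a b :: nat
  assumes "is_weighted_chromatic W"
    and "simple_graph V E"
    and "a \<in> V" and "b \<in> V" and "a \<noteq> b"
  shows "W V E unit_weight - W V (switch_ab E a b) unit_weight
       = W V (tilde_ab E a b) unit_weight - W V (tilde'_ab E a b) unit_weight"
proof -
  have G: "weighted_graph V E unit_weight"
    using assms(2) unfolding weighted_graph_def by simp
  have G': "weighted_graph V (tilde_ab E a b) unit_weight"
    using simple_graph_tilde_ab[OF assms(2,3)] unfolding weighted_graph_def by simp
  have same_edge: "{a, b} \<in> tilde_ab E a b \<longleftrightarrow> {a, b} \<in> E"
    using edge_ab_in_tilde_ab_iff[OF assms(5) simple_graph_no_loop[OF assms(2)]] .
  show ?thesis
    using weighted_chromatic_diff_switch_ab[OF assms(1) G assms(3-5)]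
      weighted_chromatic_diff_switch_ab[OF assms(1) G' assms(3-5)]
    unfolding tilde'_ab_def contract_edges_tilde_ab[OF assms(5)] same_edge by simp
qed

end
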